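(* Let $D$ be a positive integer and $p$ a prime with $D>p^2$. Let $f$ be a reduced form of discriminant $-4Dp^2$ whose class in $C(-4Dp^2)$ is derived from the class of $e_{-4D}=(1,0,D)$ in $C(-4D)$, and suppose $f$ is not equivalent to $e_{-4Dp^2}=(1,0,Dp^2)$. Then \[ f=(p^2,\;2pk,\;k^2+D) \] for some integer $k$ with $-p/2\le k\le p/2$.
   Context: A binary quadratic form $(a,b,c)$ means $ax^2+bxy+cy^2$ with $a,b,c\in\mathbb Z$, of discriminant $b^2-4ac$; it is primitive if $\gcd(a,b,c)=1$. Two forms are equivalent if one is obtained from the other by a substitution $(x,y)\mapsto(px+qy,\,sx+ty)$ with integer coefficients and $pt-qs=1$. A form $(a,b,c)$ of negative discriminant is reduced if $|b|\le a\le c$, and $b\ge 0$ whenever $|b|=a$ or $a=c$; every positive definite form is equivalent to a unique reduced form. For $\Delta<0$, $C(\Delta)$ is the class group of equivalence classes of primitive positive definite forms of discriminant $\Delta$ under composition. For a positive integer $r$, a class $f\in C(\Delta r^2)$ is derived from a class $g\in C(\Delta)$ if there exist a representative $g_0$ of $g$ and an integer matrix $\begin{pmatrix}\alpha&\beta\\ \gamma&\delta\end{pmatrix}$ of determinant $r$ such that the form $g_0(\alpha x+\beta y,\gamma x+\delta y)$ lies in the class $f$. *)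

theory Defs
  imports "HOL-Computational_Algebra.Primes"
begin

type_synonym bqf = "int \<times> int \<times> int"   (* (a,b,c) = a x^2 + b x y + c y^2 *)

fun disc :: "bqf \<Rightarrow> int" where
  "disc (a, b, c) = b^2 - 4*a*c"

fun primitive :: "bqf \<Rightarrow> bool" where
  "primitive (a, b, c) = (gcd a (gcd b c) = 1)"

fun pos_def :: "bqf \<Rightarrow> bool" where
  "pos_def (a, b, c) = (a > 0 \<and> b^2 - 4*a*c < 0)"

text \<open>The form g(al x + be y, ga x + de y).\<close>
fun subst_form :: "bqf \<Rightarrow> int \<Rightarrow> int \<Rightarrow> int \<Rightarrow> int \<Rightarrow> bqf" where
  "subst_form (a, b, c) al be ga de =
     (a*al^2 + b*al*ga + c*ga^2,
      2*a*al*be + b*(al*de + be*ga) + 2*c*ga*de,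
      a*be^2 + b*be*de + c*de^2)"

definition form_equiv :: "bqf \<Rightarrow> bqf \<Rightarrow> bool" where
  "form_equiv f g \<longleftrightarrow> (\<exists>p q s t. p*t - q*s = 1 \<and> g = subst_form f p q s t)"

fun reduced :: "bqf \<Rightarrow> bool" where
  "reduced (a, b, c) = (\<bar>b\<bar> \<le> a \<and> a \<le> c \<and> ((\<bar>b\<bar> = a \<or> a = c) \<longrightarrow> b \<ge> 0))"

definition derived_from :: "int \<Rightarrow> bqf \<Rightarrow> bqf \<Rightarrow> bool" where
  "derived_from r f g \<longleftrightarrow>
     (\<exists>g0 al be ga de. form_equiv g g0 \<and> al*de - be*ga = r \<and>
        form_equiv (subst_form g0 al be ga de) f)"

end

theory Submission
  imports Defs
begin

text \<open>Composing the three substitutions in the definition of derived classes gives one integer matrix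
  of determinant \<open>p\<close> carrying \<open>(1, 0, D)\<close> to \<open>f\<close>. Such an \<open>f\<close> represents \<open>p\<^sup>2\<close>, and the first
  coefficient of a reduced form is the least value it takes on nonzero vectors, so
  \<open>\<alpha>\<^sup>2 + D \<gamma>\<^sup>2 \<le> p\<^sup>2 < D\<close>. Hence \<open>\<gamma> = 0\<close> and \<open>\<alpha> \<delta> = p\<close>; the case \<open>\<alpha> = \<plusminus>1\<close> gives the principal form
  \<open>(1, 0, D p\<^sup>2)\<close>, and the case \<open>\<delta> = \<plusminus>1\<close> gives \<open>(p\<^sup>2, 2 p k, k\<^sup>2 + D)\<close>, reduced exactly when
  \<open>\<bar>2 k\<bar> \<le> p\<close>.\<close>

fun form_value :: "bqf \<Rightarrow> int \<Rightarrow> int \<Rightarrow> int" where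
  "form_value (a, b, c) x y = a*x^2 + b*x*y + c*y^2"

lemma subst_form_subst_form:
  "subst_form (subst_form g \<alpha>1 \<beta>1 \<gamma>1 \<delta>1) \<alpha>2 \<beta>2 \<gamma>2 \<delta>2 =
   subst_form g (\<alpha>1*\<alpha>2 + \<beta>1*\<gamma>2) (\<alpha>1*\<beta>2 + \<beta>1*\<delta>2) (\<gamma>1*\<alpha>2 + \<delta>1*\<gamma>2) (\<gamma>1*\<beta>2 + \<delta>1*\<delta>2)"
  by (cases g) (simp add: algebra_simps power2_eq_square)

lemma form_value_subst_form:
  "form_value (subst_form g \<alpha> \<beta> \<gamma> \<delta>) x y = form_value g (\<alpha>*x + \<beta>*y) (\<gamma>*x + \<delta>*y)"
  by (cases g) (simp add: algebra_simps power2_eq_square)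

lemma form_value_subst_form_det:
  "form_value (subst_form (a, b, c) \<alpha> \<beta> \<gamma> \<delta>) \<delta> (-\<gamma>) = a * (\<alpha>*\<delta> - \<beta>*\<gamma>)^2"
  by (simp add: form_value_subst_form algebra_simps power2_eq_square)

lemma form_equiv_refl: "form_equiv f f"
  unfolding form_equiv_def by (rule exI[of _ 1], rule exI[of _ 0], rule exI[of _ 0]) (cases f, simp)

lemma derived_from_imp_subst_form:
  assumes "derived_from r f g"
  obtains \<alpha> \<beta> \<gamma> \<delta> where "\<alpha>*\<delta> - \<beta>*\<gamma> = r" and "f = subst_form g \<alpha> \<beta> \<gamma> \<delta>"
proof -
  obtain g0 \<alpha>1 \<beta>1 \<gamma>1 \<delta>1 where "form_equiv g g0" and det1: "\<alpha>1*\<delta>1 - \<beta>1*\<gamma>1 = r"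
    and "form_equiv (subst_form g0 \<alpha>1 \<beta>1 \<gamma>1 \<delta>1) f"
    using assms unfolding derived_from_def by blast
  then obtain \<alpha>0 \<beta>0 \<gamma>0 \<delta>0 \<alpha>2 \<beta>2 \<gamma>2 \<delta>2
    where det0: "\<alpha>0*\<delta>0 - \<beta>0*\<gamma>0 = 1" and g0: "g0 = subst_form g \<alpha>0 \<beta>0 \<gamma>0 \<delta>0"
      and det2: "\<alpha>2*\<delta>2 - \<beta>2*\<gamma>2 = 1" and f: "f = subst_form (subst_form g0 \<alpha>1 \<beta>1 \<gamma>1 \<delta>1) \<alpha>2 \<beta>2 \<gamma>2 \<delta>2"
    unfolding form_equiv_def by blast
  define \<alpha> \<beta> \<gamma> \<delta> where
    "\<alpha> = (\<alpha>0*\<alpha>1 + \<beta>0*\<gamma>1)*\<alpha>2 + (\<alpha>0*\<beta>1 + \<beta>0*\<delta>1)*\<gamma>2"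
    "\<beta> = (\<alpha>0*\<alpha>1 + \<beta>0*\<gamma>1)*\<beta>2 + (\<alpha>0*\<beta>1 + \<beta>0*\<delta>1)*\<delta>2"
    "\<gamma> = (\<gamma>0*\<alpha>1 + \<delta>0*\<gamma>1)*\<alpha>2 + (\<gamma>0*\<beta>1 + \<delta>0*\<delta>1)*\<gamma>2"
    "\<delta> = (\<gamma>0*\<alpha>1 + \<delta>0*\<gamma>1)*\<beta>2 + (\<gamma>0*\<beta>1 + \<delta>0*\<delta>1)*\<delta>2"
  have "\<alpha>*\<delta> - \<beta>*\<gamma> = (\<alpha>0*\<delta>0 - \<beta>0*\<gamma>0) * (\<alpha>1*\<delta>1 - \<beta>1*\<gamma>1) * (\<alpha>2*\<delta>2 - \<beta>2*\<gamma>2)"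
    unfolding \<alpha>_\<beta>_\<gamma>_\<delta>_def by (simp add: algebra_simps)
  then have "\<alpha>*\<delta> - \<beta>*\<gamma> = r"
    using det0 det1 det2 by simp
  moreover have "f = subst_form g \<alpha> \<beta> \<gamma> \<delta>"
    unfolding f g0 subst_form_subst_form \<alpha>_\<beta>_\<gamma>_\<delta>_def ..
  ultimately show thesis by (rule that)
qed

lemma first_coeff_le_form_value:
  fixes a b c x y :: int
  assumes "\<bar>b\<bar> \<le> a" and "a \<le> c" and "(x, y) \<noteq> (0, 0)"
  shows "a \<le> form_value (a, b, c) x y"
proof -
  have "\<bar>b*x*y\<bar> \<le> a*\<bar>x\<bar>*\<bar>y\<bar>"
    using assms(1) by (simp add: abs_mult mult_right_mono)
  moreover have "a*y^2 \<le> c*y^2"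
    using assms(2) by (simp add: mult_right_mono)
  ultimately have "a * (x^2 - \<bar>x\<bar>*\<bar>y\<bar> + y^2) \<le> form_value (a, b, c) x y"
    by (simp add: algebra_simps)
  moreover have "x^2 - \<bar>x\<bar>*\<bar>y\<bar> + y^2 = (\<bar>x\<bar> - \<bar>y\<bar>)^2 + \<bar>x\<bar>*\<bar>y\<bar>"
    by (simp add: power2_eq_square algebra_simps)
  moreover have "1 \<le> (\<bar>x\<bar> - \<bar>y\<bar>)^2 + \<bar>x\<bar>*\<bar>y\<bar>"
  proof (cases "\<bar>x\<bar> = \<bar>y\<bar>")
    case True
    with assms(3) have "1 \<le> \<bar>x\<bar>" and "1 \<le> \<bar>y\<bar>"
      by auto
    then have "1 * 1 \<le> \<bar>x\<bar>*\<bar>y\<bar>"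
      by (rule mult_mono) simp_all
    then show ?thesis
      using zero_le_power2[of "\<bar>x\<bar> - \<bar>y\<bar>"] by linarith
  next
    case False
    then have "0 < (\<bar>x\<bar> - \<bar>y\<bar>)^2"
      by simp
    then show ?thesis
      using zero_le_mult_iff[of "\<bar>x\<bar>" "\<bar>y\<bar>"] by linarith
  qed
  moreover have "0 \<le> a"
    using assms(1) by linarith
  ultimately show ?thesis
    using mult_left_mono[of 1 "(\<bar>x\<bar> - \<bar>y\<bar>)^2 + \<bar>x\<bar>*\<bar>y\<bar>" a] by simp
qed

lemma reduced_subst_unit_form_lower_left_zero:
  fixes D r :: int
  assumes "reduced (subst_form (1, 0, D) \<alpha> \<beta> \<gamma> \<delta>)"
    and "\<alpha>*\<delta> - \<beta>*\<gamma> = r" and "r \<noteq> 0" and "r^2 < D"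
  shows "\<gamma> = 0"
proof -
  have coeffs: "subst_form (1, 0, D) \<alpha> \<beta> \<gamma> \<delta> = (\<alpha>^2 + D*\<gamma>^2, 2*\<alpha>*\<beta> + 2*D*\<gamma>*\<delta>, \<beta>^2 + D*\<delta>^2)"
    by (simp add: algebra_simps)
  have "(\<delta>, -\<gamma>) \<noteq> (0, 0)"
    using assms(2,3) by auto
  then have "\<alpha>^2 + D*\<gamma>^2 \<le> form_value (subst_form (1, 0, D) \<alpha> \<beta> \<gamma> \<delta>) \<delta> (-\<gamma>)"
    using assms(1) unfolding coeffs by (intro first_coeff_le_form_value) auto
  also have "\<dots> = r^2"
    unfolding form_value_subst_form_det assms(2) by simp
  finally have "D*\<gamma>^2 < D*1"
    using assms(4) zero_le_power2[of \<alpha>] by linarith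
  moreover have "D > 0"
    using assms(4) zero_le_power2[of r] by linarith
  ultimately have "\<bar>\<gamma>\<bar> < 1"
    by (simp add: mult_less_cancel_left_pos abs_square_less_1)
  then show ?thesis
    by simp
qed

theorem proposition3p1:
  fixes D p :: int and f :: bqf
  assumes "D > 0" and "prime p" and "D > p^2"
    and "reduced f" and "disc f = -4*D*p^2"
    and "primitive f" and "pos_def f"
    and "derived_from p f (1, 0, D)"
    and "\<not> form_equiv f (1, 0, D*p^2)"
  shows "\<exists>k::int. f = (p^2, 2*p*k, k^2 + D) \<and> -p \<le> 2*k \<and> 2*k \<le> p"
proof -
  \<comment> \<open>The discriminant, primitivity and definiteness hypotheses are implied by the others.\<close>
  obtain \<alpha> \<beta> \<gamma> \<delta> where det: "\<alpha>*\<delta> - \<beta>*\<gamma> = p" and f: "f = subst_form (1, 0, D) \<alpha> \<beta> \<gamma> \<delta>"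
    using assms(8) by (rule derived_from_imp_subst_form)
  have "p > 0"
    using assms(2) by (simp add: prime_gt_0_int)
  then have "\<gamma> = 0"
    using assms(3,4) det unfolding f by (intro reduced_subst_unit_form_lower_left_zero[where r = p]) auto
  have f_coeffs: "f = (\<alpha>^2, 2*\<alpha>*\<beta>, \<beta>^2 + D*\<delta>^2)"
    unfolding f \<open>\<gamma> = 0\<close> by (simp add: algebra_simps)
  from det \<open>\<gamma> = 0\<close> have p: "p = \<alpha>*\<delta>"
    by simp
  have "irreducible p"
    using assms(2) by (metis prime_elem_imp_irreducible prime_imp_prime_elem)
  from irreducibleD[OF this p] consider "\<bar>\<alpha>\<bar> = 1" | "\<bar>\<delta>\<bar> = 1"
    by auto
  then show ?thesis
  proof cases
    case 1
    then have "\<alpha>^2 = 1"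
      by (metis power2_abs power_one)
    then have "\<delta>^2 = p^2"
      using p by (simp add: power_mult_distrib)
    have "\<bar>2*\<alpha>*\<beta>\<bar> \<le> 1"
      using assms(4) \<open>\<alpha>^2 = 1\<close> unfolding f_coeffs by simp
    then have "\<beta> = 0"
      using 1 by (simp add: abs_mult)
    then have "f = (1, 0, D*p^2)"
      using \<open>\<alpha>^2 = 1\<close> \<open>\<delta>^2 = p^2\<close> unfolding f_coeffs by (simp add: mult.commute)
    with assms(9) form_equiv_refl show ?thesis
      by simp
  next
    case 2
    then have "\<delta>^2 = 1"
      by (metis power2_abs power_one)
    then have "\<alpha> = p*\<delta>"
      using p by (simp add: power2_eq_square algebra_simps)
    define k where "k = \<delta>*\<beta>"
    have "f = (p^2, 2*p*k, k^2 + D)"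
      using \<open>\<delta>^2 = 1\<close> \<open>\<alpha> = p*\<delta>\<close> unfolding f_coeffs k_def
      by (simp add: power_mult_distrib algebra_simps)
    moreover from this have "p * \<bar>2*k\<bar> \<le> p * p"
      using assms(4) \<open>p > 0\<close> by (simp add: abs_mult power2_eq_square)
    then have "\<bar>2*k\<bar> \<le> p"
      using \<open>p > 0\<close> by simp
    ultimately show ?thesis
      by auto
  qed
qed

end
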